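(* Let $(S,\ast)$ be an adequate partial semigroup and let $p\in\delta S$. Then $p$ is an idempotent if and only if for each $A\in p$ there is a nonempty set $T$ of functions such that (a) for all $f\in T$, $\mathrm{domain}(f)\in\omega$ and $\mathrm{range}(f)\subseteq A$; (b) for all $f\in T$, $B_f(T)\in p$; (c) for all $f\in T$ and all $x\in B_f(T)$, $B_{f^\frown x}(T)\subseteq x^{-1}B_f(T)$.
   Context: A partial semigroup is a pair $(S,\ast)$ where $\ast$ is an operation defined on a subset of $S\times S$ such that $(x\ast y)\ast z=x\ast(y\ast z)$ in the sense that if either side is defined, so is the other and they are equal. $\phi_S(s)=\{t: s\ast t\text{ defined}\}$, $\sigma_S(H)=\bigcap_{s\in H}\phi_S(s)$ for finite nonempty $H\subseteq S$; $S$ is adequate if all $\sigma_S(H)\ne\emptyset$. $\delta S=\bigcap_{x\in S}\overline{\phi_S(x)}$ is the set of ultrafilters on $S$ containing every $\phi_S(x)$, with operation $p\ast q=\{A\subseteq S:\{s: s^{-1}A\in q\}\in p\}$, where $s^{-1}A=\{t\in\phi_S(s): s\ast t\in A\}$; this makes $\delta S$ a semigroup. $\omega$ is the first infinite ordinal, each ordinal being the set of its predecessors, so $[n]=\{0,\dots,n-1\}$. For a function $f$ with domain $[n]\in\omega$ and $x\in S$, $f^\frown x=f\cup\{(n,x)\}$ (domain $[n+1]$, with $f^\frown x(n)=x$). For a set $T$ of functions with domains in $\omega$ and values in $S$, and $f\in T$, $B_f(T)=\{x: f^\frown x\in T\}$. *)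

theory Defs
  imports Main
begin

text \<open>A partial operation on the ambient type 'a (which plays the role of S):
  op x y = None means x * y is undefined.\<close>

definition partial_semigroup :: "('a \<Rightarrow> 'a \<Rightarrow> 'a option) \<Rightarrow> bool" where
  "partial_semigroup op \<longleftrightarrow>
     (\<forall>x y z. Option.bind (op x y) (\<lambda>u. op u z) = Option.bind (op y z) (\<lambda>v. op x v))"

definition phiS :: "('a \<Rightarrow> 'a \<Rightarrow> 'a option) \<Rightarrow> 'a \<Rightarrow> 'a set" where
  "phiS op s = {t. op s t \<noteq> None}"

definition sigmaS :: "('a \<Rightarrow> 'a \<Rightarrow> 'a option) \<Rightarrow> 'a set \<Rightarrow> 'a set" where
  "sigmaS op H = (\<Inter>s\<in>H. phiS op s)"

definition adequate :: "('a \<Rightarrow> 'a \<Rightarrow> 'a option) \<Rightarrow> bool" where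
  "adequate op \<longleftrightarrow> (\<forall>H. finite H \<and> H \<noteq> {} \<longrightarrow> sigmaS op H \<noteq> {})"

definition is_ultrafilter :: "'a set set \<Rightarrow> bool" where
  "is_ultrafilter p \<longleftrightarrow>
     UNIV \<in> p \<and> {} \<notin> p \<and>
     (\<forall>A B. A \<in> p \<and> A \<subseteq> B \<longrightarrow> B \<in> p) \<and>
     (\<forall>A B. A \<in> p \<and> B \<in> p \<longrightarrow> A \<inter> B \<in> p) \<and>
     (\<forall>A. A \<in> p \<or> - A \<in> p)"

definition deltaS :: "('a \<Rightarrow> 'a \<Rightarrow> 'a option) \<Rightarrow> 'a set set set" where
  "deltaS op = {p. is_ultrafilter p \<and> (\<forall>x. phiS op x \<in> p)}"

definition inv_left :: "('a \<Rightarrow> 'a \<Rightarrow> 'a option) \<Rightarrow> 'a \<Rightarrow> 'a set \<Rightarrow> 'a set" where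
  "inv_left op s A = {t \<in> phiS op s. the (op s t) \<in> A}"

definition uf_prod :: "('a \<Rightarrow> 'a \<Rightarrow> 'a option) \<Rightarrow> 'a set set \<Rightarrow> 'a set set \<Rightarrow> 'a set set" where
  "uf_prod op p q = {A. {s. inv_left op s A \<in> q} \<in> p}"

text \<open>Functions with domain [n] into 'a are represented as lists of length n;
  f\<frown>x is f @ [x].  B_f(T) = {x. f\<frown>x \<in> T}.\<close>
definition Bset :: "'a list set \<Rightarrow> 'a list \<Rightarrow> 'a set" where
  "Bset T f = {x. f @ [x] \<in> T}"

end

theory Submission
  imports Defs
begin

text \<open>If p is idempotent and C \<in> p, then C* = {x \<in> C. x\<inverse>C \<in> p} lies in p, and
  x\<inverse>(C*) \<in> p for every x \<in> C*, because (x * y)\<inverse>C = y\<inverse>(x\<inverse>C). Hence the tree with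
  branching sets B_[] = A* and B_(f\<frown>x) = (x\<inverse>B_f \<inter> B_f)* for x \<in> B_f has all its
  branching sets in p. Conversely, any branching set B_f of a tree for A lies in A and, by (b)
  and (c), in {x. x\<inverse>A \<in> p}; so p \<subseteq> p * p, and since p * p never contains a set together
  with its complement, p * p = p.\<close>

lemma ultrafilter_mono: "is_ultrafilter p \<Longrightarrow> A \<in> p \<Longrightarrow> A \<subseteq> B \<Longrightarrow> B \<in> p"
  unfolding is_ultrafilter_def by blast

lemma ultrafilter_Int: "is_ultrafilter p \<Longrightarrow> A \<in> p \<Longrightarrow> B \<in> p \<Longrightarrow> A \<inter> B \<in> p"
  unfolding is_ultrafilter_def by blast

lemma ultrafilter_nonempty: "is_ultrafilter p \<Longrightarrow> A \<in> p \<Longrightarrow> A \<noteq> {}"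
  unfolding is_ultrafilter_def by blast

lemma inv_left_mono: "A \<subseteq> B \<Longrightarrow> inv_left op x A \<subseteq> inv_left op x B"
  unfolding inv_left_def by auto

lemma inv_left_assoc:
  assumes "partial_semigroup op" and "op x y = Some u"
  shows "inv_left op y (inv_left op x A) = inv_left op u A"
proof -
  have "op u t = Option.bind (op y t) (op x)" for t
    using assms unfolding partial_semigroup_def by (metis bind.simps(2))
  then show ?thesis
    unfolding inv_left_def phiS_def by (auto split: Option.bind_splits)
qed

lemma uf_prod_not_compl:
  assumes "is_ultrafilter q" and "is_ultrafilter r"
    and "A \<in> uf_prod op q r" and "- A \<in> uf_prod op q r"
  shows False
proof -
  have "{s. inv_left op s A \<in> r} \<inter> {s. inv_left op s (- A) \<in> r} \<in> q"
    using assms by (auto simp: uf_prod_def intro: ultrafilter_Int)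
  then obtain s where "inv_left op s A \<in> r" and "inv_left op s (- A) \<in> r"
    using ultrafilter_nonempty[OF assms(1)] by blast
  then have "inv_left op s A \<inter> inv_left op s (- A) \<noteq> {}"
    using ultrafilter_Int ultrafilter_nonempty assms(2) by blast
  then show False
    unfolding inv_left_def by auto
qed

lemma uf_prod_eq_if_subset:
  assumes "is_ultrafilter p" and "is_ultrafilter q" and "is_ultrafilter r"
    and "p \<subseteq> uf_prod op q r"
  shows "uf_prod op q r = p"
proof
  show "uf_prod op q r \<subseteq> p"
  proof
    fix A assume "A \<in> uf_prod op q r"
    moreover have "A \<in> p \<or> - A \<in> p"
      using assms(1) unfolding is_ultrafilter_def by blast
    ultimately show "A \<in> p"
      using uf_prod_not_compl[OF assms(2,3)] assms(4) by blast
  qed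
qed (fact assms(4))

definition is_tree_for ::
    "('a \<Rightarrow> 'a \<Rightarrow> 'a option) \<Rightarrow> 'a set set \<Rightarrow> 'a set \<Rightarrow> 'a list set \<Rightarrow> bool" where
  "is_tree_for op p A T \<longleftrightarrow> T \<noteq> {} \<and>
    (\<forall>f\<in>T. set f \<subseteq> A) \<and>
    (\<forall>f\<in>T. Bset T f \<in> p) \<and>
    (\<forall>f\<in>T. \<forall>x\<in>Bset T f. Bset T (f @ [x]) \<subseteq> inv_left op x (Bset T f))"

lemma mem_uf_prod_if_tree:
  assumes "is_ultrafilter p" and "is_tree_for op p A T"
  shows "A \<in> uf_prod op p p"
proof -
  obtain f where f: "f \<in> T"
    using assms(2) by (auto simp: is_tree_for_def)
  have B_mem: "Bset T f \<in> p"
    using assms(2) f by (simp add: is_tree_for_def)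
  have B_subset: "Bset T f \<subseteq> A"
    using assms(2) by (auto simp: is_tree_for_def Bset_def)
  have "Bset T f \<subseteq> {s. inv_left op s A \<in> p}"
  proof
    fix x assume x: "x \<in> Bset T f"
    then have "f @ [x] \<in> T"
      by (simp add: Bset_def)
    then have "Bset T (f @ [x]) \<in> p"
      using assms(2) unfolding is_tree_for_def by blast
    moreover have "Bset T (f @ [x]) \<subseteq> inv_left op x A"
      using assms(2) f x inv_left_mono[OF B_subset] unfolding is_tree_for_def by blast
    ultimately show "x \<in> {s. inv_left op s A \<in> p}"
      using ultrafilter_mono[OF assms(1)] by blast
  qed
  then show ?thesis
    unfolding uf_prod_def using assms(1) B_mem ultrafilter_mono by blast
qed

lemma uf_prod_idempotent_if_trees:
  assumes "is_ultrafilter p" and "\<forall>A\<in>p. \<exists>T. is_tree_for op p A T"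
  shows "uf_prod op p p = p"
  using assms mem_uf_prod_if_tree uf_prod_eq_if_subset by (metis subsetI)

definition star_set :: "('a \<Rightarrow> 'a \<Rightarrow> 'a option) \<Rightarrow> 'a set set \<Rightarrow> 'a set \<Rightarrow> 'a set" where
  "star_set op p C = {x \<in> C. inv_left op x C \<in> p}"

definition branching_set :: "('a \<Rightarrow> 'a \<Rightarrow> 'a option) \<Rightarrow> 'a set set \<Rightarrow> 'a set \<Rightarrow> 'a list \<Rightarrow> 'a set"
  where "branching_set op p A f =
    foldl (\<lambda>B x. star_set op p (inv_left op x B \<inter> B)) (star_set op p A) f"

inductive_set star_tree :: "('a \<Rightarrow> 'a \<Rightarrow> 'a option) \<Rightarrow> 'a set set \<Rightarrow> 'a set \<Rightarrow> 'a list set"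
  for op p A where
  Nil: "[] \<in> star_tree op p A"
| snoc: "f \<in> star_tree op p A \<Longrightarrow> x \<in> branching_set op p A f \<Longrightarrow> f @ [x] \<in> star_tree op p A"

lemma star_set_subset: "star_set op p C \<subseteq> C"
  unfolding star_set_def by auto

lemma branching_set_Nil: "branching_set op p A [] = star_set op p A"
  by (simp add: branching_set_def)

lemma branching_set_snoc:
  "branching_set op p A (f @ [x]) =
    star_set op p (inv_left op x (branching_set op p A f) \<inter> branching_set op p A f)"
  by (simp add: branching_set_def)

lemma branching_set_subset: "branching_set op p A f \<subseteq> A"
proof (induction f rule: rev_induct)
  case Nil
  show ?case by (simp add: branching_set_Nil star_set_subset)
next
  case (snoc x f)
  then show ?case
    using star_set_subset by (fastforce simp: branching_set_snoc)
qed

lemma branching_set_is_star: "\<exists>C. branching_set op p A f = star_set op p C"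
  by (cases f rule: rev_exhaust) (auto simp: branching_set_Nil branching_set_snoc)

lemma star_tree_snoc_iff:
  "f @ [x] \<in> star_tree op p A \<longleftrightarrow> f \<in> star_tree op p A \<and> x \<in> branching_set op p A f"
  by (auto elim: star_tree.cases intro: star_tree.snoc)

lemma Bset_star_tree:
  "f \<in> star_tree op p A \<Longrightarrow> Bset (star_tree op p A) f = branching_set op p A f"
  by (simp add: Bset_def star_tree_snoc_iff)

lemma set_subset_if_star_tree: "f \<in> star_tree op p A \<Longrightarrow> set f \<subseteq> A"
  by (induction rule: star_tree.induct) (auto intro: subsetD[OF branching_set_subset])

context
  fixes op :: "'a \<Rightarrow> 'a \<Rightarrow> 'a option" and p :: "'a set set"
  assumes semigroup: "partial_semigroup op"
    and ultra: "is_ultrafilter p"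
    and idem: "uf_prod op p p = p"
begin

lemma inv_left_set_mem_if_mem: "C \<in> p \<Longrightarrow> {x. inv_left op x C \<in> p} \<in> p"
  using idem unfolding uf_prod_def by blast

lemma star_set_mem:
  assumes "C \<in> p"
  shows "star_set op p C \<in> p"
proof -
  have "C \<inter> {x. inv_left op x C \<in> p} \<in> p"
    using assms by (intro ultrafilter_Int[OF ultra] inv_left_set_mem_if_mem)
  moreover have "C \<inter> {x. inv_left op x C \<in> p} = star_set op p C"
    by (auto simp: star_set_def)
  ultimately show ?thesis by simp
qed

lemma inv_left_star_set_mem:
  assumes "x \<in> star_set op p C"
  shows "inv_left op x (star_set op p C) \<in> p"
proof -
  let ?D = "inv_left op x C"
  have D: "?D \<in> p" using assms by (simp add: star_set_def)
  have "?D \<inter> {y. inv_left op y ?D \<in> p} \<subseteq> inv_left op x (star_set op p C)"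
  proof
    fix y assume y: "y \<in> ?D \<inter> {y. inv_left op y ?D \<in> p}"
    then obtain u where u: "op x y = Some u" and "u \<in> C"
      by (auto simp: inv_left_def phiS_def)
    moreover have "inv_left op u C \<in> p"
      using y inv_left_assoc[OF semigroup u] by simp
    ultimately show "y \<in> inv_left op x (star_set op p C)"
      by (simp add: inv_left_def phiS_def star_set_def)
  qed
  then show ?thesis
    using ultrafilter_mono[OF ultra ultrafilter_Int[OF ultra D inv_left_set_mem_if_mem[OF D]]]
    by blast
qed

lemma branching_set_mem:
  assumes "A \<in> p"
  shows "f \<in> star_tree op p A \<Longrightarrow> branching_set op p A f \<in> p"
proof (induction rule: star_tree.induct)
  case Nil
  show ?case using star_set_mem[OF assms] by (simp add: branching_set_Nil)
next
  case (snoc f x)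
  let ?B = "branching_set op p A f"
  obtain C where "?B = star_set op p C"
    using branching_set_is_star[of op p A f] by blast
  then have "inv_left op x ?B \<in> p" using snoc.hyps(2) inv_left_star_set_mem by simp
  then have "inv_left op x ?B \<inter> ?B \<in> p"
    using snoc.IH by (rule ultrafilter_Int[OF ultra])
  then show ?case
    by (simp add: branching_set_snoc star_set_mem)
qed

lemma star_tree_is_tree_for:
  assumes "A \<in> p"
  shows "is_tree_for op p A (star_tree op p A)"
  unfolding is_tree_for_def
proof (intro conjI ballI)
  show "star_tree op p A \<noteq> {}"
    using star_tree.Nil by blast
next
  fix f assume f: "f \<in> star_tree op p A"
  then show "set f \<subseteq> A"
    by (rule set_subset_if_star_tree)
  show "Bset (star_tree op p A) f \<in> p"
    using branching_set_mem[OF assms f] Bset_star_tree[OF f] by simp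
  fix x assume "x \<in> Bset (star_tree op p A) f"
  then have "f @ [x] \<in> star_tree op p A"
    by (simp add: Bset_def)
  then show "Bset (star_tree op p A) (f @ [x]) \<subseteq> inv_left op x (Bset (star_tree op p A) f)"
    using Bset_star_tree f star_set_subset by (fastforce simp: branching_set_snoc)
qed

end

theorem lemma4p3:
  fixes op :: "'a \<Rightarrow> 'a \<Rightarrow> 'a option" and p :: "'a set set"
  assumes "partial_semigroup op" and "adequate op" and "p \<in> deltaS op"
  shows "uf_prod op p p = p \<longleftrightarrow>
    (\<forall>A\<in>p. \<exists>T :: 'a list set. T \<noteq> {} \<and>
        (\<forall>f\<in>T. set f \<subseteq> A) \<and>
        (\<forall>f\<in>T. Bset T f \<in> p) \<and>
        (\<forall>f\<in>T. \<forall>x\<in>Bset T f. Bset T (f @ [x]) \<subseteq> inv_left op x (Bset T f)))"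
proof -
  have ultra: "is_ultrafilter p"
    using assms(3) by (simp add: deltaS_def)
  \<comment> \<open>Adequacy only guarantees that \<delta>S is nonempty.\<close>
  have "uf_prod op p p = p \<longleftrightarrow> (\<forall>A\<in>p. \<exists>T. is_tree_for op p A T)"
    using star_tree_is_tree_for[OF assms(1) ultra] uf_prod_idempotent_if_trees[OF ultra] by blast
  then show ?thesis
    by (simp add: is_tree_for_def)
qed

end
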